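(* In the symmetric-erasure retransmission model described in the context, for every realization of the erasure variables, every vertex $v\in\mathcal V$ and every $t\ge 0$, there exists a time-like sequence of length $t$ ending at $v$ that has at least $t-n_v(t)$ erased steps.
   Context: Let $\mathcal G=(\mathcal V,\mathcal E)$ be a finite connected undirected simple graph with $N=|\mathcal V|$ vertices and maximum degree $\Delta$; $\mathcal N_v$ denotes the set of neighbours of $v$. Fix an erasure probability $p\in[0,1]$. Erasures are symmetric: for every undirected edge $e\in\mathcal E$ and every round $t\ge 1$ there is a random variable $S^e_t\in\{0,1\}$ with $P(S^e_t=1)=1-p$ ($S^e_t=1$ means the edge works in round $t$, $S^e_t=0$ means the packets in both directions on $e$ are erased in round $t$), and all these variables are mutually independent. The retransmission protocol for distributed consensus is described by integer state variables $n_{vu}(t)$, for every ordered pair $(v,u)$ with $u\in\mathcal N_v$ and every $t\ge 0$ (the index of the latest iterate of node $u$ available at node $v$ after round $t$), together with $n_v(t)=1+\min_{u\in\mathcal N_v} n_{vu}(t)$ (the number of iterations of the consensus update $x^v_{k+1}=x^v_k-\epsilon\sum_{u\in\mathcal N_v}(x^v_k-x^u_k)$ that node $v$ has completed after round $t$). Initially $n_{vu}(0)=-1$ for all such pairs (so $n_v(0)=0$), and for all $t\ge 0$ $$n_{vu}(t+1)=n_{vu}(t)+S^{\{u,v\}}_{t+1}\cdot\mathbf 1\{n_u(t)>n_{vu}(t)\}.$$ Node $u$ is said to transmit a "wait" to node $v$ in round $t+1$ iff $n_{vu}(t)=n_u(t)$. A time-like sequence of length $t$ ending at $v$ is a sequence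 of vertices $(w_t,w_{t-1},\dots,w_0)$ with $w_t=v$ such that for each $1\le\tau\le t$ either $w_\tau=w_{\tau-1}$ or $\{w_\tau,w_{\tau-1}\}\in\mathcal E$ (equivalently, a path in the "trellis" whose vertices are the copies $v_\tau$, $v\in\mathcal V$, $\tau\ge0$, and whose edges join $v_\tau$ and $u_{\tau-1}$ whenever $u=v$ or $\{u,v\}\in\mathcal E$). Its $\tau$-th step ($1\le\tau\le t$) is called erased if $w_\tau\ne w_{\tau-1}$ and $S^{\{w_\tau,w_{\tau-1}\}}_\tau=0$. *)

theory Defs
  imports Main
begin

definition simple_graph :: "'a set \<Rightarrow> ('a \<Rightarrow> 'a \<Rightarrow> bool) \<Rightarrow> bool" where
  "simple_graph V E \<longleftrightarrow> finite V \<and> V \<noteq> {} \<and>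
     (\<forall>u v. E u v \<longrightarrow> u \<in> V \<and> v \<in> V) \<and>
     (\<forall>u v. E u v \<longrightarrow> E v u) \<and> (\<forall>v. \<not> E v v)"

definition connected_graph :: "'a set \<Rightarrow> ('a \<Rightarrow> 'a \<Rightarrow> bool) \<Rightarrow> bool" where
  "connected_graph V E \<longleftrightarrow> (\<forall>u\<in>V. \<forall>v\<in>V. E\<^sup>*\<^sup>* u v)"

definition nbrs :: "'a set \<Rightarrow> ('a \<Rightarrow> 'a \<Rightarrow> bool) \<Rightarrow> 'a \<Rightarrow> 'a set" where
  "nbrs V E v = {u \<in> V. E v u}"

text \<open>State variables n_vu(t) of the retransmission protocol, for a realization S of the
  erasure variables (S e t = True iff undirected edge e works in round t).\<close>
fun nvu :: "'a set \<Rightarrow> ('a \<Rightarrow> 'a \<Rightarrow> bool) \<Rightarrow> ('a set \<Rightarrow> nat \<Rightarrow> bool) \<Rightarrow> nat \<Rightarrow> 'a \<Rightarrow> 'a \<Rightarrow> int" where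
  "nvu V E S 0 v u = -1"
| "nvu V E S (Suc t) v u =
     nvu V E S t v u +
     (if S {u, v} (Suc t) \<and> 1 + Min (nvu V E S t u ` nbrs V E u) > nvu V E S t v u then 1 else 0)"

definition nv :: "'a set \<Rightarrow> ('a \<Rightarrow> 'a \<Rightarrow> bool) \<Rightarrow> ('a set \<Rightarrow> nat \<Rightarrow> bool) \<Rightarrow> nat \<Rightarrow> 'a \<Rightarrow> int" where
  "nv V E S t v = 1 + Min (nvu V E S t v ` nbrs V E v)"

lemma nvu_Suc_nv:
  "nvu V E S (Suc t) v u = nvu V E S t v u +
     (if S {u, v} (Suc t) \<and> nv V E S t u > nvu V E S t v u then 1 else 0)"
  by (simp add: nv_def)

text \<open>Time-like sequence (w_t, ..., w_0) of length t ending at v, represented by w :: nat => 'a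
  (only values at indices 0..t matter).\<close>
definition time_like :: "'a set \<Rightarrow> ('a \<Rightarrow> 'a \<Rightarrow> bool) \<Rightarrow> nat \<Rightarrow> 'a \<Rightarrow> (nat \<Rightarrow> 'a) \<Rightarrow> bool" where
  "time_like V E t v w \<longleftrightarrow> w t = v \<and> (\<forall>\<tau>\<le>t. w \<tau> \<in> V) \<and>
     (\<forall>\<tau>\<in>{1..t}. w \<tau> = w (\<tau> - 1) \<or> E (w \<tau>) (w (\<tau> - 1)))"

definition erased_steps :: "('a set \<Rightarrow> nat \<Rightarrow> bool) \<Rightarrow> nat \<Rightarrow> (nat \<Rightarrow> 'a) \<Rightarrow> nat set" where
  "erased_steps S t w = {\<tau> \<in> {1..t}. w \<tau> \<noteq> w (\<tau> - 1) \<and> \<not> S {w \<tau>, w (\<tau> - 1)} \<tau>}"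

end

theory Submission
  imports Defs
begin

(* Call "x has an erasure witness of size k at time t" the statement that some
   time-like sequence of length t ending at x has at least k erased steps.  Such witnesses
   are monotone in k and can be prolonged by one round, either staying at x or moving to a
   neighbour x'; moving across an edge erased in that round gains one erased step.

   The heart of the argument is an invariant for every ordered pair of neighbours (v,u):
   both v and u have an erasure witness of size  t - 1 - n_vu(t).  It is proved by
   induction on t, distinguishing whether in round t+1 the counter n_vu advances (the bound
   is unchanged), the edge works but u has nothing new (the bound comes from the neighbour
   of u realising n_u(t)), or the edge is erased (a witness crosses the erased edge).

   The theorem follows by applying the invariant to a neighbour u of v realising the
   minimum in n_v(t) = 1 + min_u n_vu(t); such a neighbour exists since the graph is
   connected with at least two vertices. *)

definition erasure_witness ::
  "'a set \<Rightarrow> ('a \<Rightarrow> 'a \<Rightarrow> bool) \<Rightarrow> ('a set \<Rightarrow> nat \<Rightarrow> bool) \<Rightarrow> nat \<Rightarrow> 'a \<Rightarrow> int \<Rightarrow> bool" where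
  "erasure_witness V E S t x k \<longleftrightarrow>
     (\<exists>w. time_like V E t x w \<and> k \<le> int (card (erased_steps S t w)))"

lemma time_like_extend:
  assumes "time_like V E t x w" and "x' \<in> V" and "x' = x \<or> E x' x"
  shows "time_like V E (Suc t) x' (w(Suc t := x'))"
  using assms unfolding time_like_def by (auto simp: le_Suc_eq)

lemma erased_steps_extend:
  assumes "time_like V E t x w"
  shows "card (erased_steps S (Suc t) (w(Suc t := x'))) =
     card (erased_steps S t w) + (if x' \<noteq> x \<and> \<not> S {x', x} (Suc t) then 1 else 0)"
proof -
  have "w t = x" using assms by (simp add: time_like_def)
  then have split: "erased_steps S (Suc t) (w(Suc t := x')) =
      erased_steps S t w \<union> (if x' \<noteq> x \<and> \<not> S {x', x} (Suc t) then {Suc t} else {})"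
    by (auto simp: erased_steps_def le_Suc_eq)
  have "finite (erased_steps S t w)" and "Suc t \<notin> erased_steps S t w"
    by (simp_all add: erased_steps_def)
  then show ?thesis unfolding split by auto
qed

lemma erasure_witness_mono:
  "erasure_witness V E S t x k \<Longrightarrow> k' \<le> k \<Longrightarrow> erasure_witness V E S t x k'"
  unfolding erasure_witness_def by force

lemma erasure_witness_start: "x \<in> V \<Longrightarrow> erasure_witness V E S 0 x 0"
  unfolding erasure_witness_def time_like_def by (intro exI[of _ "\<lambda>_. x"]) auto

lemma erasure_witness_step:
  assumes "erasure_witness V E S t x k" and "x' \<in> V" and "x' = x \<or> E x' x"
  shows "erasure_witness V E S (Suc t) x' k"
proof -
  obtain w where w: "time_like V E t x w" "k \<le> int (card (erased_steps S t w))"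
    using assms(1) unfolding erasure_witness_def by blast
  show ?thesis
    unfolding erasure_witness_def
    using time_like_extend[OF w(1) assms(2,3)] erased_steps_extend[OF w(1), of S x'] w(2)
    by (intro exI[of _ "w(Suc t := x')"]) auto
qed

lemma erasure_witness_erased_step:
  assumes "erasure_witness V E S t x k" and "x' \<in> V" and "E x' x" and "\<not> E x x"
    and "\<not> S {x', x} (Suc t)"
  shows "erasure_witness V E S (Suc t) x' (k + 1)"
proof -
  obtain w where w: "time_like V E t x w" "k \<le> int (card (erased_steps S t w))"
    using assms(1) unfolding erasure_witness_def by blast
  have "x' \<noteq> x" using assms(3,4) by auto
  then show ?thesis
    unfolding erasure_witness_def
    using time_like_extend[OF w(1) assms(2)] erased_steps_extend[OF w(1), of S x'] w(2) assms(3,5)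
    by (intro exI[of _ "w(Suc t := x')"]) auto
qed

lemma nv_attained:
  assumes "finite V" and "y \<in> nbrs V E x"
  obtains u where "u \<in> nbrs V E x" and "nv V E S t x = 1 + nvu V E S t x u"
proof -
  have "finite (nbrs V E x)" using assms(1) by (simp add: nbrs_def)
  then have "Min (nvu V E S t x ` nbrs V E x) \<in> nvu V E S t x ` nbrs V E x"
    using assms(2) by (intro Min_in) auto
  then show ?thesis using that by (auto simp: nv_def)
qed

lemma edge_invariant:
  assumes g: "simple_graph V E" and "v \<in> V" and "u \<in> nbrs V E v"
  shows "erasure_witness V E S t v (int t - 1 - nvu V E S t v u) \<and>
         erasure_witness V E S t u (int t - 1 - nvu V E S t v u)"
  using assms(2,3)
proof (induction t arbitrary: v u)
  case 0
  then show ?case using erasure_witness_start by (auto simp: nbrs_def)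
next
  case (Suc t)
  have sym: "\<And>a b. E a b \<Longrightarrow> E b a" and irrefl: "\<And>a. \<not> E a a" and "finite V"
    using g by (auto simp: simple_graph_def)
  have vV: "v \<in> V" and uV: "u \<in> V" and Evu: "E v u" and Euv: "E u v"
    using Suc.prems sym by (auto simp: nbrs_def)
  let ?k = "int t - 1 - nvu V E S t v u"
  have IH_v: "erasure_witness V E S t v ?k" and IH_u: "erasure_witness V E S t u ?k"
    using Suc by auto
  consider (advance) "S {u, v} (Suc t)" and "nv V E S t u > nvu V E S t v u"
    | (idle) "S {u, v} (Suc t)" and "nv V E S t u \<le> nvu V E S t v u"
    | (erased) "\<not> S {u, v} (Suc t)"
    by fastforce
  then show ?case
  proof cases
    case advance
    have same: "int (Suc t) - 1 - nvu V E S (Suc t) v u = ?k"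
      using advance by (simp add: nvu_Suc_nv del: nvu.simps)
    show ?thesis unfolding same
      using erasure_witness_step[OF IH_v vV] erasure_witness_step[OF IH_u uV] by auto
  next
    case idle
    have new: "int (Suc t) - 1 - nvu V E S (Suc t) v u = ?k + 1"
      using idle by (simp add: nvu_Suc_nv del: nvu.simps)
    have "v \<in> nbrs V E u" using Euv vV by (simp add: nbrs_def)
    then obtain w where w: "w \<in> nbrs V E u" and nv_u: "nv V E S t u = 1 + nvu V E S t u w"
      using nv_attained[OF \<open>finite V\<close>] by blast
    (* the neighbour w realising n_u(t) carries a witness at u that is large enough *)
    have "erasure_witness V E S t u (int t - 1 - nvu V E S t u w)"
      using Suc.IH[OF uV w] by blast
    then have at_u: "erasure_witness V E S t u (?k + 1)"
      by (rule erasure_witness_mono) (use idle nv_u in simp)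
    show ?thesis unfolding new
      using erasure_witness_step[OF at_u vV] erasure_witness_step[OF at_u uV] Evu by auto
  next
    case erased
    have new: "int (Suc t) - 1 - nvu V E S (Suc t) v u = ?k + 1"
      using erased by (simp add: nvu_Suc_nv del: nvu.simps)
    have "\<not> S {v, u} (Suc t)" using erased by (simp add: insert_commute)
    then show ?thesis unfolding new
      using erasure_witness_erased_step[OF IH_u vV Evu irrefl]
        erasure_witness_erased_step[OF IH_v uV Euv irrefl erased] by auto
  qed
qed

lemma has_neighbour:
  assumes "simple_graph V E" and "connected_graph V E" and "card V \<ge> 2" and "v \<in> V"
  obtains y where "y \<in> nbrs V E v"
proof -
  have "\<not> V \<subseteq> {v}"
  proof
    assume "V \<subseteq> {v}"
    then have "card V \<le> card {v}" by (intro card_mono) auto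
    with assms(3) show False by simp
  qed
  then obtain x where x: "x \<in> V" "x \<noteq> v" by blast
  have "E\<^sup>*\<^sup>* v x" using assms(2,4) x(1) by (simp add: connected_graph_def)
  then obtain y where "E v y" using x(2) by (metis converse_rtranclpE)
  then show ?thesis using that assms(1) by (auto simp: nbrs_def simple_graph_def)
qed

theorem lemma5:
  fixes V :: "'a set" and E :: "'a \<Rightarrow> 'a \<Rightarrow> bool" and S :: "'a set \<Rightarrow> nat \<Rightarrow> bool"
  assumes "simple_graph V E" and "connected_graph V E" and "card V \<ge> 2"
    and "v \<in> V"
  shows "\<exists>w. time_like V E t v w \<and>
           int t - nv V E S t v \<le> int (card (erased_steps S t w))"
proof -
  have "finite V" using assms(1) by (simp add: simple_graph_def)
  obtain y where "y \<in> nbrs V E v" using has_neighbour[OF assms] .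
  then obtain u where u: "u \<in> nbrs V E v" and nv_v: "nv V E S t v = 1 + nvu V E S t v u"
    using nv_attained[OF \<open>finite V\<close>] by blast
  have "erasure_witness V E S t v (int t - 1 - nvu V E S t v u)"
    using edge_invariant[OF assms(1,4) u] by blast
  then have "erasure_witness V E S t v (int t - nv V E S t v)"
    by (rule erasure_witness_mono) (simp add: nv_v)
  then show ?thesis unfolding erasure_witness_def .
qed

end
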